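(* Assume the standing assumptions (A1)–(A3). Then the optimal value of \[ (\overline{Aff})\quad\min_{x,\lambda,Y}\ c^Tx+\lambda\ \ \text{s.t.}\ \ x\in\mathcal X,\ \ \lambda g_1g_1^T-\tfrac12G(x)+\tfrac12H(Y)\in\mathrm{COP}(\widehat{\mathcal U}\times\mathbb R^m_+), \] with $\lambda\in\mathbb R$, $Y\in\mathbb R^{n_2\times k}$, equals $v^*_{Aff}$.
   Context: Data: $A\in\mathbb R^{m\times n_1}$, $B\in\mathbb R^{m\times n_2}$, $c\in\mathbb R^{n_1}$, $d\in\mathbb R^{n_2}$, $F\in\mathbb R^{m\times k}$, $\mathcal X\subseteq\mathbb R^{n_1}$ closed convex. $\widehat{\mathcal U}\subseteq\mathbb R_+\times\mathbb R^{k-1}$ is a closed, convex, full-dimensional cone and $\mathcal U:=\{u\in\widehat{\mathcal U}: u_1=1\}$, assumed nonempty and compact. $e_1\in\mathbb R^k$ first standard basis vector, $g_1:=(e_1;0)\in\mathbb R^{k+m}$. (RLP): $v^*_{RLP}:=\inf\{c^Tx+\sup_{u\in\mathcal U}d^Ty(u)\}$ over $x\in\mathcal X$ and maps $y:\mathcal U\to\mathbb R^{n_2}$ with $Ax+By(u)\ge Fu$ for all $u\in\mathcal U$. Standing assumptions: (A1) $\mathcal X,\widehat{\mathcal U}$ computationally tractable; (A2) (RLP) feasible; (A3) $v^*_{RLP}$ finite. The affine-policy value is $v^*_{Aff}:=\inf\{c^Tx+\sup_{u\in\mathcal U}d^TYu\}$ over $x\in\mathcal X$, $Y\in\mathbb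 R^{n_2\times k}$ with $Ax+BYu\ge Fu$ for all $u\in\mathcal U$. $G(x):=\begin{pmatrix}0&(F-Axe_1^T)^T\\ F-Axe_1^T&0\end{pmatrix}$, $H(Y):=\begin{pmatrix}-e_1d^TY-Y^Tde_1^T&(BY)^T\\ BY&0\end{pmatrix}$, both in $\mathcal S^{k+m}$. $\mathrm{COP}(\mathcal K):=\{M\in\mathcal S^n: z^TMz\ge0\ \forall z\in\mathcal K\}$ for a closed convex cone $\mathcal K\subseteq\mathbb R^n$. *)

theory Defs
  imports "HOL-Analysis.Analysis"
begin

definition outer :: "real^'m::finite \<Rightarrow> real^'n::finite \<Rightarrow> real^'n::finite^'m::finite" where
  "outer a b = (\<chi> i j. a $ i * b $ j)"

definition blockmat :: "real^'k::finite^'k::finite \<Rightarrow> real^'m::finite^'k::finite \<Rightarrow> real^'k::finite^'m::finite \<Rightarrow> real^'m::finite^'m::finite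
    \<Rightarrow> real^('k::finite + 'm::finite)^('k::finite + 'm::finite)" where
  "blockmat M11 M12 M21 M22 = (\<chi> r s. case r of
       Inl i \<Rightarrow> (case s of Inl j \<Rightarrow> M11 $ i $ j | Inr q \<Rightarrow> M12 $ i $ q)
     | Inr p \<Rightarrow> (case s of Inl j \<Rightarrow> M21 $ p $ j | Inr q \<Rightarrow> M22 $ p $ q))"

definition vjoin :: "real^'k::finite \<Rightarrow> real^'m::finite \<Rightarrow> real^('k::finite + 'm::finite)" where
  "vjoin u w = (\<chi> r. case r of Inl i \<Rightarrow> u $ i | Inr p \<Rightarrow> w $ p)"

text \<open>First standard basis vector; the "first" coordinate is a designated index i1.\<close>
definition e1 :: "'k::finite \<Rightarrow> real^'k::finite" where
  "e1 i1 = axis i1 1"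

definition g1 :: "'k::finite \<Rightarrow> real^('k::finite + 'm::finite)" where
  "g1 i1 = vjoin (e1 i1) 0"

definition COP :: "(real^'n::finite) set \<Rightarrow> (real^'n::finite^'n::finite) set" where
  "COP K = {M. transpose M = M \<and> (\<forall>z\<in>K. 0 \<le> z \<bullet> (M *v z))}"

definition cone_prod_nonneg :: "(real^'k::finite) set \<Rightarrow> (real^('k::finite + 'm::finite)) set" where
  "cone_prod_nonneg Uh = {vjoin u w | u w. u \<in> Uh \<and> (\<forall>p. 0 \<le> w $ p)}"

definition Uset :: "(real^'k::finite) set \<Rightarrow> 'k::finite \<Rightarrow> (real^'k::finite) set" where
  "Uset Uh i1 = {u \<in> Uh. u $ i1 = 1}"

definition Gmat :: "real^'n1::finite^'m::finite \<Rightarrow> real^'k::finite^'m::finite \<Rightarrow> 'k::finite \<Rightarrow> real^'n1::finite \<Rightarrow> real^('k::finite + 'm::finite)^('k::finite + 'm::finite)" where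
  "Gmat A F i1 x = blockmat 0 (transpose (F - outer (A *v x) (e1 i1))) (F - outer (A *v x) (e1 i1)) 0"

definition Hmat :: "real^'n2::finite^'m::finite \<Rightarrow> real^'n2::finite \<Rightarrow> 'k::finite \<Rightarrow> real^'k::finite^'n2::finite \<Rightarrow> real^('k::finite + 'm::finite)^('k::finite + 'm::finite)" where
  "Hmat B d i1 Y = blockmat (- outer (e1 i1) (d v* Y) - outer (transpose Y *v d) (e1 i1))
                            (transpose (B ** Y)) (B ** Y) 0"

definition v_RLP :: "real^'n1::finite^'m::finite \<Rightarrow> real^'n2::finite^'m::finite \<Rightarrow> real^'n1::finite \<Rightarrow> real^'n2::finite \<Rightarrow> real^'k::finite^'m::finite
    \<Rightarrow> (real^'n1::finite) set \<Rightarrow> (real^'k::finite) set \<Rightarrow> 'k::finite \<Rightarrow> ereal" where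
  "v_RLP A B c d F X Uh i1 =
     (INF xy \<in> {(x, y). x \<in> X \<and> (\<forall>u\<in>Uset Uh i1. \<forall>p. (F *v u) $ p \<le> (A *v x + B *v y u) $ p)}.
        ereal (c \<bullet> fst xy) + (SUP u \<in> Uset Uh i1. ereal (d \<bullet> snd xy u)))"

definition v_Aff :: "real^'n1::finite^'m::finite \<Rightarrow> real^'n2::finite^'m::finite \<Rightarrow> real^'n1::finite \<Rightarrow> real^'n2::finite \<Rightarrow> real^'k::finite^'m::finite
    \<Rightarrow> (real^'n1::finite) set \<Rightarrow> (real^'k::finite) set \<Rightarrow> 'k::finite \<Rightarrow> ereal" where
  "v_Aff A B c d F X Uh i1 =
     (INF xY \<in> {(x, Y). x \<in> X \<and> (\<forall>u\<in>Uset Uh i1. \<forall>p. (F *v u) $ p \<le> (A *v x + B *v (Y *v u)) $ p)}.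
        ereal (c \<bullet> fst xY) + (SUP u \<in> Uset Uh i1. ereal (d \<bullet> (snd xY *v u))))"

definition v_AffCOP :: "real^'n1::finite^'m::finite \<Rightarrow> real^'n2::finite^'m::finite \<Rightarrow> real^'n1::finite \<Rightarrow> real^'n2::finite \<Rightarrow> real^'k::finite^'m::finite
    \<Rightarrow> (real^'n1::finite) set \<Rightarrow> (real^'k::finite) set \<Rightarrow> 'k::finite \<Rightarrow> ereal" where
  "v_AffCOP A B c d F X Uh i1 =
     (INF xlY \<in> {(x, lam, Y). x \<in> X \<and>
          lam *\<^sub>R outer (g1 i1) (g1 i1) - (1/2) *\<^sub>R Gmat A F i1 x + (1/2) *\<^sub>R Hmat B d i1 Y
            \<in> COP (cone_prod_nonneg Uh)}.
        ereal (c \<bullet> fst xlY + fst (snd xlY)))"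

end

theory Submission
  imports Defs
begin

text \<open>
  On the cone \<open>\<widehat>\<U> \<times> \<real>\<^sup>m\<^sub>+\<close> the quadratic form of
  \<open>\<lambda> g\<^sub>1 g\<^sub>1\<^sup>T - G(x)/2 + H(Y)/2\<close> at \<open>(u; w)\<close> equals
  \<open>u\<^sub>1 (\<lambda> u\<^sub>1 - d\<^sup>T Y u) + w\<^sup>T (u\<^sub>1 A x + B Y u - F u)\<close>.
  Since \<open>w\<close> ranges over a cone and, for \<open>u\<^sub>1 > 0\<close>, \<open>u / u\<^sub>1 \<in> \<U>\<close>,
  copositivity is equivalent to robust feasibility of \<open>(x, Y)\<close> together with
  \<open>\<lambda> \<ge> max\<^sub>u\<^sub>\<in>\<^sub>\<U> d\<^sup>T Y u\<close>; points with \<open>u\<^sub>1 = 0\<close> are harmless because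
  boundedness of \<open>\<U>\<close> forces them to vanish. Minimising over \<open>\<lambda>\<close> then recovers
  the affine-policy objective, the maximum being attained by compactness of \<open>\<U>\<close>.
\<close>

lemma inner_vjoin: "vjoin a b \<bullet> vjoin c d = a \<bullet> c + b \<bullet> d"
  unfolding inner_vec_def
  by (simp add: UNIV_Plus_UNIV[symmetric] sum.Plus del: UNIV_Plus_UNIV) (simp add: vjoin_def o_def)

lemma blockmat_mult_vjoin:
  "blockmat P Q R S *v vjoin u w = vjoin (P *v u + Q *v w) (R *v u + S *v w)"
  unfolding vec_eq_iff
proof
  fix r show "(blockmat P Q R S *v vjoin u w) $ r = vjoin (P *v u + Q *v w) (R *v u + S *v w) $ r"
    unfolding matrix_vector_mult_def
    by (cases r) (simp_all add: UNIV_Plus_UNIV[symmetric] sum.Plus blockmat_def vjoin_def o_def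
        del: UNIV_Plus_UNIV)
qed

lemma outer_mult_vector: "outer a b *v z = (b \<bullet> z) *\<^sub>R a"
  by (simp add: outer_def vec_eq_iff matrix_vector_mult_def inner_vec_def sum_distrib_left mult_ac)

lemma inner_vector_matrix: "u \<bullet> ((w::real^_) v* K) = w \<bullet> (K *v u)"
  by (metis dot_lmul_matrix inner_commute)

lemma uminus_matrix_vector_mult: "(- M) *v (v::real^_) = - (M *v v)"
  by (metis add.inverse_neutral diff_0 matrix_vector_mult_0 matrix_vector_mult_diff_rdistrib)

lemma inner_e1: "e1 i1 \<bullet> u = u $ i1" "u \<bullet> e1 i1 = u $ i1"
  by (simp_all add: e1_def inner_axis' inner_axis)

lemma inner_nonneg_vec: "(\<forall>p. 0 \<le> (w::real^'m) $ p) \<Longrightarrow> (\<forall>p. 0 \<le> v $ p) \<Longrightarrow> 0 \<le> w \<bullet> v"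
  unfolding inner_vec_def by (auto intro!: sum_nonneg)

definition cop_matrix ::
    "real^'n1::finite^'m::finite \<Rightarrow> real^'n2::finite^'m::finite \<Rightarrow> real^'n2 \<Rightarrow> real^'k::finite^'m
      \<Rightarrow> 'k \<Rightarrow> real^'n1 \<Rightarrow> real \<Rightarrow> real^'k^'n2 \<Rightarrow> real^('k + 'm)^('k + 'm)" where
  "cop_matrix A B d F i1 x lam Y =
     lam *\<^sub>R outer (g1 i1) (g1 i1) - (1/2) *\<^sub>R Gmat A F i1 x + (1/2) *\<^sub>R Hmat B d i1 Y"

lemma transpose_cop_matrix: "transpose (cop_matrix A B d F i1 x lam Y) = cop_matrix A B d F i1 x lam Y"
  by (simp add: vec_eq_iff transpose_def cop_matrix_def Gmat_def Hmat_def blockmat_def outer_def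
      g1_def vjoin_def transpose_matrix_vector[unfolded transpose_def] split: sum.splits)

lemma quadratic_form_cop_matrix:
  "vjoin u w \<bullet> (cop_matrix A B d F i1 x lam Y *v vjoin u w)
    = lam * (u$i1)^2 - (u$i1) * (d \<bullet> (Y *v u)) + w \<bullet> ((u$i1) *\<^sub>R (A *v x) + B *v (Y *v u) - F *v u)"
proof -
  have g: "g1 i1 \<bullet> vjoin u w = u $ i1"
    by (simp add: g1_def inner_vjoin inner_e1)
  have "vjoin u w \<bullet> (outer (g1 i1) (g1 i1) *v vjoin u w) = (u$i1)^2"
    by (simp add: outer_mult_vector g inner_commute[of "vjoin u w"] power2_eq_square)
  moreover have "vjoin u w \<bullet> (Gmat A F i1 x *v vjoin u w) = 2 * (w \<bullet> (F *v u - (u$i1) *\<^sub>R (A *v x)))"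
    unfolding Gmat_def blockmat_mult_vjoin inner_vjoin
    by (simp add: inner_vector_matrix matrix_vector_mult_diff_rdistrib outer_mult_vector inner_e1
        inner_diff_right)
  moreover have "vjoin u w \<bullet> (Hmat B d i1 Y *v vjoin u w)
      = -2 * (u$i1) * (d \<bullet> (Y *v u)) + 2 * (w \<bullet> (B *v (Y *v u)))"
    unfolding Hmat_def blockmat_mult_vjoin inner_vjoin
    by (simp add: inner_vector_matrix matrix_vector_mult_diff_rdistrib outer_mult_vector inner_e1
        inner_diff_right uminus_matrix_vector_mult matrix_vector_mul_assoc inner_add_right
        dot_lmul_matrix)
  ultimately show ?thesis
    unfolding cop_matrix_def matrix_vector_mult_add_rdistrib matrix_vector_mult_diff_rdistrib
      scaleR_matrix_vector_assoc[symmetric] inner_add_right inner_diff_right inner_scaleR_right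
    by (simp add: inner_add_right inner_diff_right algebra_simps)
qed

lemma convex_cone_bounded_slice_imp_zero:
  fixes Uh :: "(real^'k) set"
  assumes "convex Uh" "cone Uh" "Uset Uh i1 \<noteq> {}" "bounded (Uset Uh i1)"
    and u: "u \<in> Uh" "u $ i1 = 0"
  shows "u = 0"
proof (rule ccontr)
  assume "u \<noteq> 0"
  obtain u0 where u0: "u0 \<in> Uset Uh i1" using assms(3) by auto
  obtain b where b: "\<And>v. v \<in> Uset Uh i1 \<Longrightarrow> norm v \<le> b"
    using assms(4) unfolding bounded_iff by auto
  obtain n :: nat where n: "real n > (b + norm u0) / norm u"
    using reals_Archimedean2 by blast
  \<comment> \<open>\<open>u0 + n u\<close> stays in the slice but its norm grows without bound\<close>
  have "real n *\<^sub>R u \<in> Uh"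
    using \<open>cone Uh\<close> u unfolding cone_def by auto
  moreover have "\<forall>a\<in>Uh. \<forall>b\<in>Uh. a + b \<in> Uh"
    using assms(1,2) convex_cone by blast
  ultimately have "u0 + real n *\<^sub>R u \<in> Uset Uh i1"
    using u u0 unfolding Uset_def by auto
  then have "norm (u0 + real n *\<^sub>R u) \<le> b" by (rule b)
  moreover have "norm (real n *\<^sub>R u) \<le> norm (u0 + real n *\<^sub>R u) + norm u0"
    by (metis add.commute add_diff_cancel_left' norm_triangle_ineq4)
  ultimately have "real n * norm u \<le> b + norm u0" by simp
  with n \<open>u \<noteq> 0\<close> show False by (simp add: field_simps)
qed

lemma cop_matrix_copositive_imp_robust:
  assumes "cop_matrix A B d F i1 x lam Y \<in> COP (cone_prod_nonneg Uh)"
  shows "\<forall>u\<in>Uset Uh i1. \<forall>p. (F *v u) $ p \<le> (A *v x + B *v (Y *v u)) $ p"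
    and "\<forall>u\<in>Uset Uh i1. d \<bullet> (Y *v u) \<le> lam"
proof -
  have form: "0 \<le> lam - d \<bullet> (Y *v u) + w \<bullet> (A *v x + B *v (Y *v u) - F *v u)"
    if "u \<in> Uset Uh i1" "\<forall>p. 0 \<le> w $ p" for u w
  proof -
    have "vjoin u w \<in> cone_prod_nonneg Uh"
      using that unfolding cone_prod_nonneg_def Uset_def by auto
    with assms have "0 \<le> vjoin u w \<bullet> (cop_matrix A B d F i1 x lam Y *v vjoin u w)"
      unfolding COP_def by blast
    with that(1) show ?thesis
      unfolding quadratic_form_cop_matrix Uset_def by simp
  qed
  show "\<forall>u\<in>Uset Uh i1. d \<bullet> (Y *v u) \<le> lam"
    using form[where w = 0] by simp
  show "\<forall>u\<in>Uset Uh i1. \<forall>p. (F *v u) $ p \<le> (A *v x + B *v (Y *v u)) $ p"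
  proof (intro ballI allI)
    fix u p assume u: "u \<in> Uset Uh i1"
    define v where "v = A *v x + B *v (Y *v u) - F *v u"
    define \<alpha> where "\<alpha> = lam - d \<bullet> (Y *v u)"
    show "(F *v u) $ p \<le> (A *v x + B *v (Y *v u)) $ p"
    proof (rule ccontr)
      assume "\<not> ?thesis"
      then have vp: "v $ p < 0" unfolding v_def by simp
      \<comment> \<open>a large weight on the violated row makes the form negative\<close>
      define t where "t = (\<bar>\<alpha>\<bar> + 1) / (- v $ p)"
      have "t > 0" using vp unfolding t_def by (intro divide_pos_pos) auto
      then have "0 \<le> \<alpha> + (t *\<^sub>R axis p 1) \<bullet> v"
        using form[OF u, of "t *\<^sub>R axis p 1"] unfolding v_def \<alpha>_def by (simp add: axis_def)
      also have "(t *\<^sub>R axis p 1) \<bullet> v = - (\<bar>\<alpha>\<bar> + 1)"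
        using vp unfolding t_def by (simp add: inner_axis')
      finally show False by simp
    qed
  qed
qed

lemma robust_imp_cop_matrix_copositive:
  fixes Uh :: "(real^'k) set" and F :: "real^'k^'m"
  assumes "convex Uh" "cone Uh" "Uset Uh i1 \<noteq> {}" "bounded (Uset Uh i1)"
    and Uh_first_nonneg: "\<forall>u\<in>Uh. 0 \<le> u $ i1"
    and feasible: "\<forall>u\<in>Uset Uh i1. \<forall>p. (F *v u) $ p \<le> (A *v x + B *v (Y *v u)) $ p"
    and epigraph: "\<forall>u\<in>Uset Uh i1. d \<bullet> (Y *v u) \<le> lam"
  shows "cop_matrix A B d F i1 x lam Y \<in> COP (cone_prod_nonneg Uh)"
  unfolding COP_def
proof (intro CollectI conjI ballI transpose_cop_matrix)
  fix z :: "real^('k+'m)" assume "z \<in> cone_prod_nonneg Uh"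
  then obtain u and w :: "real^'m" where z: "z = vjoin u w" and u: "u \<in> Uh"
    and w: "\<forall>p. 0 \<le> w $ p"
    unfolding cone_prod_nonneg_def by auto
  show "0 \<le> z \<bullet> (cop_matrix A B d F i1 x lam Y *v z)"
  proof (cases "u $ i1 = 0")
    case True
    then have "u = 0" using convex_cone_bounded_slice_imp_zero[OF assms(1-4) u] by simp
    then show ?thesis unfolding z quadratic_form_cop_matrix by simp
  next
    case False
    define t where "t = u $ i1"
    have "t > 0" using False Uh_first_nonneg u unfolding t_def by force
    define u' where "u' = (1/t) *\<^sub>R u"
    have u': "u' \<in> Uset Uh i1"
      using u \<open>t > 0\<close> \<open>cone Uh\<close> unfolding Uset_def u'_def cone_def t_def by auto
    have ueq: "u = t *\<^sub>R u'" using \<open>t > 0\<close> unfolding u'_def by simp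
    define v where "v = A *v x + B *v (Y *v u') - F *v u'"
    have "z \<bullet> (cop_matrix A B d F i1 x lam Y *v z) = t^2 * (lam - d \<bullet> (Y *v u')) + t * (w \<bullet> v)"
      using u' unfolding z quadratic_form_cop_matrix v_def Uset_def
      by (simp add: ueq t_def[symmetric] matrix_vector_mult_scaleR inner_diff_right inner_add_right
          algebra_simps power2_eq_square)
    also have "\<dots> \<ge> 0"
      using \<open>t > 0\<close> u' feasible epigraph inner_nonneg_vec[OF w, of v] unfolding v_def by simp
    finally show ?thesis .
  qed
qed

lemma SUP_ereal_attained:
  assumes "compact S" "S \<noteq> {}" "continuous_on S f"
  obtains s where "(SUP u\<in>S. ereal (f u)) = ereal s" "\<forall>u\<in>S. f u \<le> s"
proof -
  obtain u0 where "u0 \<in> S" "\<forall>u\<in>S. f u \<le> f u0"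
    using continuous_attains_sup[OF assms] by blast
  then have "(SUP u\<in>S. ereal (f u)) = ereal (f u0)"
    by (intro antisym SUP_least SUP_upper2[of u0]) auto
  with \<open>\<forall>u\<in>S. f u \<le> f u0\<close> show thesis using that by blast
qed

lemma v_Aff_le_v_AffCOP: "v_Aff A B c d F X Uh i1 \<le> v_AffCOP A B c d F X Uh i1"
  unfolding v_AffCOP_def cop_matrix_def[symmetric]
proof (rule INF_greatest, clarify)
  fix x lam Y assume x: "x \<in> X" and cop: "cop_matrix A B d F i1 x lam Y \<in> COP (cone_prod_nonneg Uh)"
  have "v_Aff A B c d F X Uh i1 \<le> ereal (c \<bullet> x) + (SUP u \<in> Uset Uh i1. ereal (d \<bullet> (Y *v u)))"
    unfolding v_Aff_def
    by (rule INF_lower2[of "(x, Y)"]) (use x cop_matrix_copositive_imp_robust(1)[OF cop] in auto)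
  also have "\<dots> \<le> ereal (c \<bullet> x) + ereal lam"
    by (intro add_left_mono SUP_least) (use cop_matrix_copositive_imp_robust(2)[OF cop] in simp)
  finally show "v_Aff A B c d F X Uh i1 \<le> ereal (c \<bullet> fst (x, lam, Y) + fst (snd (x, lam, Y)))"
    by simp
qed

lemma v_AffCOP_le_v_Aff:
  fixes Uh :: "(real^'k) set"
  assumes "convex Uh" "cone Uh" "Uset Uh i1 \<noteq> {}" "compact (Uset Uh i1)"
    and "\<forall>u\<in>Uh. 0 \<le> u $ i1"
  shows "v_AffCOP A B c d F X Uh i1 \<le> v_Aff A B c d F X Uh i1"
  unfolding v_Aff_def
proof (rule INF_greatest, clarify)
  fix x Y assume x: "x \<in> X"
    and feasible: "\<forall>u\<in>Uset Uh i1. \<forall>p. (F *v u) $ p \<le> (A *v x + B *v (Y *v u)) $ p"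
  have "continuous_on (Uset Uh i1) (\<lambda>u. d \<bullet> (Y *v u))"
    unfolding dot_lmul_matrix[symmetric] by (intro continuous_intros)
  then obtain s where s: "(SUP u\<in>Uset Uh i1. ereal (d \<bullet> (Y *v u))) = ereal s"
    and epigraph: "\<forall>u\<in>Uset Uh i1. d \<bullet> (Y *v u) \<le> s"
    using SUP_ereal_attained assms(3,4) by blast
  have "cop_matrix A B d F i1 x s Y \<in> COP (cone_prod_nonneg Uh)"
    using robust_imp_cop_matrix_copositive[OF assms(1-3) compact_imp_bounded[OF assms(4)] assms(5)
        feasible epigraph] .
  then have "v_AffCOP A B c d F X Uh i1 \<le> ereal (c \<bullet> x + s)"
    unfolding v_AffCOP_def cop_matrix_def[symmetric] using x by (intro INF_lower2[of "(x, s, Y)"]) auto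
  then show "v_AffCOP A B c d F X Uh i1
      \<le> ereal (c \<bullet> fst (x, Y)) + (SUP u \<in> Uset Uh i1. ereal (d \<bullet> (snd (x, Y) *v u)))"
    by (simp add: s)
qed

theorem proposition2:
  fixes A :: "real^'n1^'m" and B :: "real^'n2^'m" and c :: "real^'n1" and d :: "real^'n2"
    and F :: "real^'k^'m" and X :: "(real^'n1) set" and Uh :: "(real^'k) set" and i1 :: 'k
  assumes X_closed: "closed X" and X_convex: "convex X"
    and Uh_closed: "closed Uh" and Uh_convex: "convex Uh" and Uh_cone: "cone Uh"
    and Uh_full: "interior Uh \<noteq> {}"
    and Uh_first_nonneg: "\<forall>u\<in>Uh. 0 \<le> u $ i1"
    and U_nonempty: "Uset Uh i1 \<noteq> {}" and U_compact: "compact (Uset Uh i1)"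
    and A2: "\<exists>x y. x \<in> X \<and> (\<forall>u\<in>Uset Uh i1. \<forall>p. (F *v u) $ p \<le> (A *v x + B *v y u) $ p)"
    and A3: "\<bar>v_RLP A B c d F X Uh i1\<bar> \<noteq> \<infinity>"
  shows "v_AffCOP A B c d F X Uh i1 = v_Aff A B c d F X Uh i1"
  using v_AffCOP_le_v_Aff[OF Uh_convex Uh_cone U_nonempty U_compact Uh_first_nonneg]
    v_Aff_le_v_AffCOP by (rule antisym)

end
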